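(* Let $\mathcal{G}$ be a group prevariety over a finite alphabet $A$. Then $\mathit{SF}(\mathcal{G}) = \mathrm{FO}(<,\mathbb{P}_{\mathcal{G}})$.
   Context: Fix a finite alphabet $A$. A prevariety is a class of regular languages over $A$ containing $\emptyset$ and $A^*$, closed under union, intersection, complement, and under the quotients $u^{-1}L=\{w\mid uw\in L\}$ and $Lu^{-1}=\{w\mid wu\in L\}$. A group prevariety is a prevariety all of whose languages are recognized by morphisms into finite groups. $\mathit{SF}(\mathcal{G})$ is the least class containing $\mathcal{G}$ and all $\{a\}$ ($a\in A$), closed under union, complement and concatenation. A word $w=a_1\cdots a_n$ is viewed as a structure with domain $\{0,\dots,n+1\}$; positions $1,\dots,n$ are labeled $a_1,\dots,a_n$ and $0,n+1$ unlabeled; for $i<j$, $w(i,j)=a_{i+1}\cdots a_{j-1}$. First-order formulas use variables over positions, constants $\mathit{min},\mathit{max}$ (interpreted as $0$, $n+1$), equality, the signature's predicates, Boolean connectives and quantifiers. Label predicates $a(x)$ hold iff position $x$ has label $a$. $\mathrm{FO}(<,\mathbb{P}_{\mathcal{G}})$ is the class of languages defined by first-order sentences using the label predicates, the linear order $<$ on positions, and the unary predicates $P_L$ for $L\in\mathcal{G}$, where $P_L(i)$ holds iff $0<i$ and $w(0,i)\in L$. *)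

theory Defs
  imports Main "HOL-Algebra.Group"
begin

section \<open>Words and languages over an alphabet 'a (the alphabet is the type UNIV)\<close>

type_synonym 'a lang = "'a list set"

definition regular :: "'a lang \<Rightarrow> bool" where
  "regular L \<longleftrightarrow> (\<exists>(n::nat) (\<delta>::nat \<Rightarrow> 'a \<Rightarrow> nat) (F::nat set).
      0 < n \<and> (\<forall>q<n. \<forall>a. \<delta> q a < n) \<and> F \<subseteq> {0..<n} \<and>
      L = {w. foldl \<delta> 0 w \<in> F})"

definition lquot :: "'a list \<Rightarrow> 'a lang \<Rightarrow> 'a lang" where
  "lquot u L = {w. u @ w \<in> L}"

definition rquot :: "'a lang \<Rightarrow> 'a list \<Rightarrow> 'a lang" where
  "rquot L u = {w. w @ u \<in> L}"

definition prevariety :: "'a lang set \<Rightarrow> bool" where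
  "prevariety C \<longleftrightarrow>
     (\<forall>L\<in>C. regular L) \<and> {} \<in> C \<and> UNIV \<in> C \<and>
     (\<forall>K\<in>C. \<forall>L\<in>C. K \<union> L \<in> C) \<and>
     (\<forall>K\<in>C. \<forall>L\<in>C. K \<inter> L \<in> C) \<and>
     (\<forall>L\<in>C. - L \<in> C) \<and>
     (\<forall>L\<in>C. \<forall>u. lquot u L \<in> C) \<and>
     (\<forall>L\<in>C. \<forall>u. rquot L u \<in> C)"

definition word_hom :: "('g, 'b) monoid_scheme \<Rightarrow> ('a \<Rightarrow> 'g) \<Rightarrow> 'a list \<Rightarrow> 'g" where
  "word_hom G h w = foldr (\<lambda>a x. h a \<otimes>\<^bsub>G\<^esub> x) w \<one>\<^bsub>G\<^esub>"

text \<open>L is recognized by a morphism into a finite group (any finite group is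
  isomorphic to one whose carrier consists of natural numbers).\<close>
definition group_recognized :: "'a lang \<Rightarrow> bool" where
  "group_recognized L \<longleftrightarrow> (\<exists>(G::nat monoid) h F.
      group G \<and> finite (carrier G) \<and> (\<forall>a. h a \<in> carrier G) \<and>
      F \<subseteq> carrier G \<and> L = {w. word_hom G h w \<in> F})"

definition group_prevariety :: "'a lang set \<Rightarrow> bool" where
  "group_prevariety C \<longleftrightarrow> prevariety C \<and> (\<forall>L\<in>C. group_recognized L)"

definition conc :: "'a lang \<Rightarrow> 'a lang \<Rightarrow> 'a lang" where
  "conc K L = {u @ v | u v. u \<in> K \<and> v \<in> L}"

inductive_set SF :: "'a lang set \<Rightarrow> 'a lang set" for G :: "'a lang set" where
  base: "L \<in> G \<Longrightarrow> L \<in> SF G"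
| letter: "{[a]} \<in> SF G"
| union: "K \<in> SF G \<Longrightarrow> L \<in> SF G \<Longrightarrow> K \<union> L \<in> SF G"
| compl: "L \<in> SF G \<Longrightarrow> - L \<in> SF G"
| concat: "K \<in> SF G \<Longrightarrow> L \<in> SF G \<Longrightarrow> conc K L \<in> SF G"

datatype fo_term = Var nat | Min | Max

datatype 'a fo =
    Eq fo_term fo_term
  | Less fo_term fo_term
  | Lab 'a fo_term
  | Pred "'a lang" fo_term
  | Neg "'a fo"
  | Conj "'a fo" "'a fo"
  | Disj "'a fo" "'a fo"
  | Ex nat "'a fo"
  | All nat "'a fo"

fun tvars :: "fo_term \<Rightarrow> nat set" where
  "tvars (Var x) = {x}"
| "tvars Min = {}"
| "tvars Max = {}"

fun free_vars :: "'a fo \<Rightarrow> nat set" where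
  "free_vars (Eq s t) = tvars s \<union> tvars t"
| "free_vars (Less s t) = tvars s \<union> tvars t"
| "free_vars (Lab a t) = tvars t"
| "free_vars (Pred L t) = tvars t"
| "free_vars (Neg \<phi>) = free_vars \<phi>"
| "free_vars (Conj \<phi> \<psi>) = free_vars \<phi> \<union> free_vars \<psi>"
| "free_vars (Disj \<phi> \<psi>) = free_vars \<phi> \<union> free_vars \<psi>"
| "free_vars (Ex x \<phi>) = free_vars \<phi> - {x}"
| "free_vars (All x \<phi>) = free_vars \<phi> - {x}"

fun preds :: "'a fo \<Rightarrow> 'a lang set" where
  "preds (Eq s t) = {}"
| "preds (Less s t) = {}"
| "preds (Lab a t) = {}"
| "preds (Pred L t) = {L}"
| "preds (Neg \<phi>) = preds \<phi>"
| "preds (Conj \<phi> \<psi>) = preds \<phi> \<union> preds \<psi>"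
| "preds (Disj \<phi> \<psi>) = preds \<phi> \<union> preds \<psi>"
| "preds (Ex x \<phi>) = preds \<phi>"
| "preds (All x \<phi>) = preds \<phi>"

text \<open>A word w = a_1...a_n has domain {0..n+1}; min = 0, max = n+1.\<close>
fun tval :: "'a list \<Rightarrow> (nat \<Rightarrow> nat) \<Rightarrow> fo_term \<Rightarrow> nat" where
  "tval w \<sigma> (Var x) = \<sigma> x"
| "tval w \<sigma> Min = 0"
| "tval w \<sigma> Max = length w + 1"

text \<open>Infix w(i,j) = a_(i+1) ... a_(j-1) for i < j.\<close>
definition infix_word :: "'a list \<Rightarrow> nat \<Rightarrow> nat \<Rightarrow> 'a list" where
  "infix_word w i j = take (j - i - 1) (drop i w)"

fun sat :: "'a list \<Rightarrow> (nat \<Rightarrow> nat) \<Rightarrow> 'a fo \<Rightarrow> bool" where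
  "sat w \<sigma> (Eq s t) \<longleftrightarrow> tval w \<sigma> s = tval w \<sigma> t"
| "sat w \<sigma> (Less s t) \<longleftrightarrow> tval w \<sigma> s < tval w \<sigma> t"
| "sat w \<sigma> (Lab a t) \<longleftrightarrow> (let i = tval w \<sigma> t in 1 \<le> i \<and> i \<le> length w \<and> w ! (i - 1) = a)"
| "sat w \<sigma> (Pred L t) \<longleftrightarrow> (let i = tval w \<sigma> t in 0 < i \<and> infix_word w 0 i \<in> L)"
| "sat w \<sigma> (Neg \<phi>) \<longleftrightarrow> \<not> sat w \<sigma> \<phi>"
| "sat w \<sigma> (Conj \<phi> \<psi>) \<longleftrightarrow> sat w \<sigma> \<phi> \<and> sat w \<sigma> \<psi>"
| "sat w \<sigma> (Disj \<phi> \<psi>) \<longleftrightarrow> sat w \<sigma> \<phi> \<or> sat w \<sigma> \<psi>"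
| "sat w \<sigma> (Ex x \<phi>) \<longleftrightarrow> (\<exists>i\<le>length w + 1. sat w (\<sigma>(x := i)) \<phi>)"
| "sat w \<sigma> (All x \<phi>) \<longleftrightarrow> (\<forall>i\<le>length w + 1. sat w (\<sigma>(x := i)) \<phi>)"

definition lang_of :: "'a fo \<Rightarrow> 'a lang" where
  "lang_of \<phi> = {w. sat w (\<lambda>_. 0) \<phi>}"

definition FO_less_P :: "'a lang set \<Rightarrow> 'a lang set" where
  "FO_less_P G = {lang_of \<phi> | \<phi>. free_vars \<phi> = {} \<and> preds \<phi> \<subseteq> G}"

end

theory Submission
  imports Defs "HOL-Algebra.Multiplicative_Group"
begin

(*
  SF(G) is contained in FO(<, P_G): by induction on SF(G), every K in SF(G) is defined by a
  formula on the factor of the word between two positions. Concatenation quantifies over the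
  split point. For L in G, recognized by a morphism into a finite group, the prefix p before the
  factor can be cancelled by some word r, so the factor s lies in L iff p lies in
  r^-1 {u | u^-1 L = L} and p s lies in r^-1 L; there are only finitely many such pairs of
  quotients, and they belong to G.

  FO(<, P_G) is contained in SF(G): put the free variables of a formula on the letters
  c_1, ..., c_m of a word u_0 c_1 u_1 ... c_m u_m. The tuples (u_0, ..., u_m) satisfying the
  formula form a finite union of products of languages of SF(G). This is preserved by the
  Boolean connectives; an existential quantifier either puts the new variable on one of the
  c_i or splits a factor as u' c u'', and the split is undone by merging u', c, u'' back into
  one component with a concatenation. For an atom P_L this needs that {(u, v) | u v in K} is a
  finite union of products for every K in SF(G), which for K in G follows again from the
  finiteness of the set of left quotients of K.
*)

section \<open>Languages recognized by finite groups\<close>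

lemma word_hom_closed:
  assumes "monoid M" "\<forall>a. h a \<in> carrier M"
  shows "word_hom M h w \<in> carrier M"
  using assms by (induction w) (auto simp: word_hom_def monoid.m_closed)

lemma word_hom_append:
  assumes "monoid M" "\<forall>a. h a \<in> carrier M"
  shows "word_hom M h (u @ v) = word_hom M h u \<otimes>\<^bsub>M\<^esub> word_hom M h v"
proof (induction u)
  case Nil
  show ?case using word_hom_closed[OF assms] by (simp add: word_hom_def monoid.l_one[OF assms(1)])
next
  case (Cons a u)
  then show ?case using word_hom_closed[OF assms] assms(2)
    by (simp add: word_hom_def monoid.m_assoc[OF assms(1)])
qed

lemma word_hom_replicate:
  assumes "monoid M" "\<forall>a. h a \<in> carrier M"
  shows "word_hom M h (concat (replicate k p)) = word_hom M h p [^]\<^bsub>M\<^esub> k"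
proof (induction k)
  case 0
  show ?case by (simp add: word_hom_def)
next
  case (Suc k)
  have "word_hom M h (concat (replicate (Suc k) p)) = word_hom M h p \<otimes>\<^bsub>M\<^esub> word_hom M h p [^]\<^bsub>M\<^esub> k"
    by (simp add: word_hom_append[OF assms] Suc.IH)
  also have "\<dots> = word_hom M h p [^]\<^bsub>M\<^esub> Suc k"
    by (rule monoid.nat_pow_Suc2[OF assms(1) word_hom_closed[OF assms], symmetric])
  finally show ?case .
qed

lemma lquot_word_hom:
  assumes "monoid M" "\<forall>a. h a \<in> carrier M"
  shows "lquot u {w. word_hom M h w \<in> F} = {w. word_hom M h u \<otimes>\<^bsub>M\<^esub> word_hom M h w \<in> F}"
  by (simp add: lquot_def word_hom_append[OF assms])

lemma rquot_word_hom:
  assumes "monoid M" "\<forall>a. h a \<in> carrier M"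
  shows "rquot {w. word_hom M h w \<in> F} v = {w. word_hom M h w \<otimes>\<^bsub>M\<^esub> word_hom M h v \<in> F}"
  by (simp add: rquot_def word_hom_append[OF assms])

lemma group_recognizedE:
  assumes "group_recognized L"
  obtains M :: "nat monoid" and h F where "group M" "monoid M" "finite (carrier M)"
    "\<forall>a. h a \<in> carrier M" "L = {w. word_hom M h w \<in> F}"
  using assms group.is_monoid unfolding group_recognized_def by blast

lemma group_recognized_finite_lquots:
  assumes "group_recognized L"
  shows "finite (range (\<lambda>u. lquot u L))"
proof -
  obtain M :: "nat monoid" and h F where M: "monoid M" "finite (carrier M)" "\<forall>a. h a \<in> carrier M"
    and L: "L = {w. word_hom M h w \<in> F}"
    using assms by (rule group_recognizedE)
  have "range (\<lambda>u. lquot u L) \<subseteq> (\<lambda>g. {w. g \<otimes>\<^bsub>M\<^esub> word_hom M h w \<in> F}) ` carrier M"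
    using M by (auto simp: L lquot_word_hom word_hom_closed)
  then show ?thesis by (rule finite_surj[OF M(2)])
qed

lemma group_recognized_finite_rquots:
  assumes "group_recognized L"
  shows "finite (range (rquot L))"
proof -
  obtain M :: "nat monoid" and h F where M: "monoid M" "finite (carrier M)" "\<forall>a. h a \<in> carrier M"
    and L: "L = {w. word_hom M h w \<in> F}"
    using assms by (rule group_recognizedE)
  have "range (rquot L) \<subseteq> (\<lambda>g. {w. word_hom M h w \<otimes>\<^bsub>M\<^esub> g \<in> F}) ` carrier M"
    using M by (auto simp: L rquot_word_hom word_hom_closed)
  then show ?thesis by (rule finite_surj[OF M(2)])
qed

text \<open>In a finite group the inverse of an element is one of its powers, so every word has a
  left inverse modulo the recognizing morphism.\<close>
lemma group_recognized_lquot_inverse: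
  assumes "group_recognized L"
  shows "\<exists>r. lquot (r @ p) L = L"
proof -
  obtain M :: "nat monoid" and h F where M: "group M" "monoid M" "finite (carrier M)"
    "\<forall>a. h a \<in> carrier M" and L: "L = {w. word_hom M h w \<in> F}"
    using assms by (rule group_recognizedE)
  define r where "r = concat (replicate (order M - 1) p)"
  have "order M = Suc (order M - 1)"
    using M(3) monoid.order_gt_0_iff_finite[OF M(2)] by simp
  then have "word_hom M h (r @ p) = word_hom M h p [^]\<^bsub>M\<^esub> order M"
    by (metis r_def M(2,4) word_hom_append word_hom_replicate monoid.nat_pow_Suc)
  also have "\<dots> = \<one>\<^bsub>M\<^esub>"
    by (rule group.pow_order_eq_1[OF M(1) word_hom_closed[OF M(2,4)]])
  finally have "lquot (r @ p) L = L"
    using M(2,4) by (simp add: L lquot_word_hom word_hom_closed)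
  then show ?thesis ..
qed

lemma prevariety_Inter:
  assumes "prevariety C" "finite F" "F \<subseteq> C"
  shows "\<Inter>F \<in> C"
  using assms(2,3) assms(1) by (induction F rule: finite_induct) (auto simp: prevariety_def)

lemma prevariety_lquot_class:
  assumes "prevariety C" "L \<in> C" "finite (range (rquot L))"
  shows "{u. lquot u L = lquot q L} \<in> C"
proof -
  have "{u. lquot u L = lquot q L} = (\<Inter>s. if q \<in> rquot L s then rquot L s else - rquot L s)"
    by (auto simp: lquot_def rquot_def split: if_splits)
  also have "\<dots> = \<Inter>((\<lambda>X. if q \<in> X then X else - X) ` range (rquot L))"
    by (simp only: image_image)
  also have "\<dots> \<in> C"
    using assms by (intro prevariety_Inter) (auto simp: prevariety_def)
  finally show ?thesis .
qed

lemma group_prevariety_lquot_class: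
  assumes "group_prevariety G" "L \<in> G"
  shows "{u. lquot u L = lquot q L} \<in> G"
  using assms by (intro prevariety_lquot_class group_recognized_finite_rquots)
    (auto simp: group_prevariety_def)

lemma group_prevariety_lquot:
  assumes "group_prevariety G" "L \<in> G"
  shows "lquot u L \<in> G"
  using assms by (simp add: group_prevariety_def prevariety_def)

section \<open>Recognizable relations\<close>

definition boolean_closed :: "'a set set \<Rightarrow> bool" where
  "boolean_closed C \<longleftrightarrow> UNIV \<in> C \<and> (\<forall>A\<in>C. - A \<in> C) \<and> (\<forall>A\<in>C. \<forall>B\<in>C. A \<inter> B \<in> C)"

lemma boolean_closed_Union:
  assumes "boolean_closed C" "finite F" "F \<subseteq> C"
  shows "\<Union>F \<in> C"
  using assms(2,3)
proof (induction F rule: finite_induct)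
  case empty
  have "- UNIV \<in> C" using assms(1) unfolding boolean_closed_def by blast
  then show ?case by simp
next
  case (insert A F)
  then have "- (- A \<inter> - \<Union>F) \<in> C" using assms(1) unfolding boolean_closed_def by blast
  moreover have "\<Union>(insert A F) = - (- A \<inter> - \<Union>F)" by blast
  ultimately show ?case by simp
qed

lemma in_listset_iff: "xs \<in> listset As \<longleftrightarrow> list_all2 (\<in>) xs As"
  by (induction As arbitrary: xs) (auto simp: set_Cons_def list_all2_Cons2)

definition recognizable :: "'a set set \<Rightarrow> nat \<Rightarrow> 'a list set \<Rightarrow> bool" where
  "recognizable C n S \<longleftrightarrow>
     (\<exists>R. finite R \<and> (\<forall>As\<in>R. length As = n \<and> set As \<subseteq> C) \<and> S = \<Union>(listset ` R))"

lemma recognizable_empty: "recognizable C n {}"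
  unfolding recognizable_def by (rule exI[of _ "{}"]) simp

lemma recognizable_listset: "length As = n \<Longrightarrow> set As \<subseteq> C \<Longrightarrow> recognizable C n (listset As)"
  unfolding recognizable_def by (rule exI[of _ "{As}"]) simp

lemma recognizable_Un:
  assumes "recognizable C n S" "recognizable C n T"
  shows "recognizable C n (S \<union> T)"
proof -
  obtain R R' where "finite R" "\<forall>As\<in>R. length As = n \<and> set As \<subseteq> C" "S = \<Union>(listset ` R)"
    and "finite R'" "\<forall>As\<in>R'. length As = n \<and> set As \<subseteq> C" "T = \<Union>(listset ` R')"
    using assms unfolding recognizable_def by blast
  then show ?thesis unfolding recognizable_def by (intro exI[of _ "R \<union> R'"]) auto
qed

lemma recognizable_UN:
  "finite I \<Longrightarrow> (\<And>i. i \<in> I \<Longrightarrow> recognizable C n (S i)) \<Longrightarrow> recognizable C n (\<Union>i\<in>I. S i)"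
  by (induction I rule: finite_induct) (auto intro: recognizable_Un recognizable_empty)

lemma listset_Int:
  "length As = length Bs \<Longrightarrow> listset As \<inter> listset Bs = listset (map2 (\<inter>) As Bs)"
  by (auto simp: in_listset_iff list_all2_conv_all_nth)

lemma recognizable_Int:
  assumes C: "\<And>A B. A \<in> C \<Longrightarrow> B \<in> C \<Longrightarrow> A \<inter> B \<in> C"
    and "recognizable C n S" "recognizable C n T"
  shows "recognizable C n (S \<inter> T)"
proof -
  obtain R R' where R: "finite R" "\<forall>As\<in>R. length As = n \<and> set As \<subseteq> C" "S = \<Union>(listset ` R)"
    and R': "finite R'" "\<forall>As\<in>R'. length As = n \<and> set As \<subseteq> C" "T = \<Union>(listset ` R')"
    using assms(2,3) unfolding recognizable_def by blast
  have "S \<inter> T = (\<Union>(As, Bs)\<in>R \<times> R'. listset (map2 (\<inter>) As Bs))"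
    using R(2) R'(2) by (auto simp: R(3) R'(3) listset_Int[symmetric])
  also have "recognizable C n \<dots>"
  proof (rule recognizable_UN)
    fix p assume "p \<in> R \<times> R'"
    then obtain As Bs where p: "p = (As, Bs)" "length As = n" "set As \<subseteq> C" "length Bs = n" "set Bs \<subseteq> C"
      using R(2) R'(2) by blast
    have "set (map2 (\<inter>) As Bs) \<subseteq> C"
      using p(3,5) by (auto intro!: C dest: set_zip_leftD set_zip_rightD)
    then show "recognizable C n (case p of (As, Bs) \<Rightarrow> listset (map2 (\<inter>) As Bs))"
      using p by (simp add: recognizable_listset)
  qed (use R(1) R'(1) in simp)
  finally show ?thesis .
qed

lemma recognizable_all:
  assumes "UNIV \<in> C"
  shows "recognizable C n {xs. length xs = n}"
proof -
  have "{xs. length xs = n} = listset (replicate n UNIV)"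
    by (auto simp: in_listset_iff list_all2_conv_all_nth)
  moreover have "set (replicate n UNIV) \<subseteq> C" using assms by (cases n) auto
  ultimately show ?thesis by (metis recognizable_listset length_replicate)
qed

lemma recognizable_const: "UNIV \<in> C \<Longrightarrow> recognizable C n {xs. length xs = n \<and> P}"
  by (cases P) (simp_all add: recognizable_all recognizable_empty)

lemma recognizable_compl_listset:
  assumes "boolean_closed C" "length As = n" "set As \<subseteq> C"
  shows "recognizable C n ({xs. length xs = n} - listset As)"
proof -
  have "{xs. length xs = n} - listset As = (\<Union>i<n. listset ((replicate n UNIV)[i := - (As ! i)]))"
    using assms(2) by (auto simp: in_listset_iff list_all2_conv_all_nth nth_list_update split: if_splits)
  also have "recognizable C n \<dots>"
    using assms by (intro recognizable_UN recognizable_listset)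
      (auto simp: boolean_closed_def dest!: subsetD[OF set_update_subset_insert]
        intro: subsetD[OF _ nth_mem])
  finally show ?thesis .
qed

lemma recognizable_compl:
  assumes "boolean_closed C" "recognizable C n S"
  shows "recognizable C n ({xs. length xs = n} - S)"
proof -
  obtain R where R: "finite R" "\<forall>As\<in>R. length As = n \<and> set As \<subseteq> C" "S = \<Union>(listset ` R)"
    using assms(2) unfolding recognizable_def by blast
  have "recognizable C n ({xs. length xs = n} - \<Union>(listset ` R))"
    using R(1,2)
  proof (induction R rule: finite_induct)
    case empty
    then show ?case using assms(1) by (simp add: boolean_closed_def recognizable_all)
  next
    case (insert As R)
    have "{xs. length xs = n} - \<Union>(listset ` insert As R) =
        ({xs. length xs = n} - listset As) \<inter> ({xs. length xs = n} - \<Union>(listset ` R))"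
      by auto
    then show ?case
      using insert assms(1) by (auto intro!: recognizable_Int recognizable_compl_listset
          simp: boolean_closed_def)
  qed
  then show ?thesis by (simp add: R(3))
qed

lemma recognizable_set_Cons:
  assumes "A \<in> C" "recognizable C n S"
  shows "recognizable C (Suc n) (set_Cons A S)"
proof -
  obtain R where R: "finite R" "\<forall>As\<in>R. length As = n \<and> set As \<subseteq> C" "S = \<Union>(listset ` R)"
    using assms(2) unfolding recognizable_def by blast
  have "set_Cons A S = \<Union>(listset ` (Cons A ` R))"
    by (auto simp: R(3) set_Cons_def)
  then show ?thesis
    unfolding recognizable_def using R(1,2) assms(1) by (intro exI[of _ "Cons A ` R"]) auto
qed

lemma take_in_listset_iff:
  assumes "length xs = n" "length As = k" "k \<le> n"
  shows "take k xs \<in> listset As \<longleftrightarrow> xs \<in> listset (As @ replicate (n - k) UNIV)"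
proof -
  have "list_all2 (\<in>) (drop k xs) (replicate (n - k) UNIV)"
    using assms(1) by (simp add: list_all2_conv_all_nth)
  then have "list_all2 (\<in>) xs (As @ replicate (n - k) UNIV) \<longleftrightarrow> list_all2 (\<in>) (take k xs) As"
    using list_all2_append[of "take k xs" As "(\<in>)" "drop k xs" "replicate (n - k) UNIV"] assms
    by simp
  then show ?thesis by (simp add: in_listset_iff)
qed

lemma recognizable_take:
  assumes "UNIV \<in> C" "recognizable C k S" "k \<le> n"
  shows "recognizable C n {xs. length xs = n \<and> take k xs \<in> S}"
proof -
  obtain R where R: "finite R" "\<forall>As\<in>R. length As = k \<and> set As \<subseteq> C" "S = \<Union>(listset ` R)"
    using assms(2) unfolding recognizable_def by blast
  have "{xs. length xs = n \<and> take k xs \<in> listset As} = listset (As @ replicate (n - k) UNIV)"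
    if "As \<in> R" for As
  proof (rule Set.set_eqI)
    fix xs
    have "length xs = n" if "xs \<in> listset (As @ replicate (n - k) UNIV)"
      using R(2) \<open>As \<in> R\<close> assms(3) that by (auto simp: in_listset_iff dest: list_all2_lengthD)
    then show "xs \<in> {xs. length xs = n \<and> take k xs \<in> listset As} \<longleftrightarrow>
        xs \<in> listset (As @ replicate (n - k) UNIV)"
      using take_in_listset_iff[of xs n As k] R(2) that assms(3) by auto
  qed
  then have "{xs. length xs = n \<and> take k xs \<in> S} = \<Union>(listset ` (\<lambda>As. As @ replicate (n - k) UNIV) ` R)"
    by (auto simp: R(3))
  then show ?thesis
    unfolding recognizable_def using R(1,2) assms(1,3)
    by (intro exI[of _ "(\<lambda>As. As @ replicate (n - k) UNIV) ` R"]) auto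
qed

lemma recognizable_singletons:
  assumes "boolean_closed C" "recognizable C 1 S"
  shows "{x. [x] \<in> S} \<in> C"
proof -
  obtain R where R: "finite R" "\<forall>As\<in>R. length As = 1 \<and> set As \<subseteq> C" "S = \<Union>(listset ` R)"
    using assms(2) unfolding recognizable_def by blast
  have "[x] \<in> listset As \<longleftrightarrow> x \<in> hd As" if "As \<in> R" for x As
    using R(2) that by (auto simp: in_listset_iff length_Suc_conv)
  then have "{x. [x] \<in> S} = \<Union>(hd ` R)"
    by (auto simp: R(3))
  also have "\<dots> \<in> C"
    using R(1,2) by (intro boolean_closed_Union[OF assms(1)]) (auto simp: length_Suc_conv)
  finally show ?thesis .
qed

lemma length_2_conv: "length xs = 2 \<longleftrightarrow> (\<exists>a b. xs = [a, b])"
proof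
  assume "length xs = 2"
  then show "\<exists>a b. xs = [a, b]"
    by (metis One_nat_def Suc_1 length_0_conv length_Suc_conv)
qed auto

lemma recognizable_pairsI:
  assumes "finite R" "R \<subseteq> C \<times> C" "\<And>u v. P u v \<longleftrightarrow> (\<exists>(A, B)\<in>R. u \<in> A \<and> v \<in> B)"
  shows "recognizable C 2 {[u, v] | u v. P u v}"
proof -
  have "{[u, v] | u v. P u v} = \<Union>(listset ` (\<lambda>(A, B). [A, B]) ` R)"
  proof (rule Set.set_eqI, rule iffI)
    fix xs assume "xs \<in> {[u, v] | u v. P u v}"
    then obtain u v where "xs = [u, v]" "P u v" by blast
    moreover obtain A B where "(A, B) \<in> R" "u \<in> A" "v \<in> B"
      using assms(3) \<open>P u v\<close> by auto
    ultimately show "xs \<in> \<Union>(listset ` (\<lambda>(A, B). [A, B]) ` R)"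
      by (force simp: in_listset_iff simp del: listset.simps)
  next
    fix xs assume "xs \<in> \<Union>(listset ` (\<lambda>(A, B). [A, B]) ` R)"
    then obtain A B where AB: "(A, B) \<in> R" "list_all2 (\<in>) xs [A, B]"
      by (auto simp: in_listset_iff simp del: listset.simps)
    then obtain u v where "xs = [u, v]" "u \<in> A" "v \<in> B"
      by (auto simp: list_all2_Cons2)
    moreover have "P u v" using assms(3) AB(1) \<open>u \<in> A\<close> \<open>v \<in> B\<close> by auto
    ultimately show "xs \<in> {[u, v] | u v. P u v}" by blast
  qed
  moreover have "\<forall>As\<in>(\<lambda>(A, B). [A, B]) ` R. length As = 2 \<and> set As \<subseteq> C"
    using assms(2) by auto
  ultimately show ?thesis unfolding recognizable_def using assms(1) by blast
qed

lemma recognizable_pairsE: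
  assumes "recognizable C 2 {[u, v] | u v. P u v}"
  obtains R where "finite R" "R \<subseteq> C \<times> C" "\<And>u v. P u v \<longleftrightarrow> (\<exists>(A, B)\<in>R. u \<in> A \<and> v \<in> B)"
proof -
  obtain R where R: "finite R" "\<forall>As\<in>R. length As = 2 \<and> set As \<subseteq> C"
    "{[u, v] | u v. P u v} = \<Union>(listset ` R)"
    using assms unfolding recognizable_def by blast
  let ?R = "(\<lambda>(A, B). [A, B]) -` R"
  have "finite ?R"
    by (rule finite_vimageI[OF R(1)]) (auto simp: inj_on_def)
  moreover have "?R \<subseteq> C \<times> C"
    using R(2) by auto
  moreover have "P u v \<longleftrightarrow> (\<exists>(A, B)\<in>?R. u \<in> A \<and> v \<in> B)" for u v
  proof -
    have "P u v \<longleftrightarrow> [u, v] \<in> {[u, v] | u v. P u v}"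
      by simp
    also have "\<dots> \<longleftrightarrow> (\<exists>As\<in>R. [u, v] \<in> listset As)"
      unfolding R(3) by blast
    also have "\<dots> \<longleftrightarrow> (\<exists>(A, B)\<in>?R. u \<in> A \<and> v \<in> B)"
    proof
      assume "\<exists>As\<in>R. [u, v] \<in> listset As"
      then obtain As where As: "As \<in> R" "[u, v] \<in> listset As" by blast
      moreover have "length As = 2" using R(2) As(1) by blast
      then obtain A B where "As = [A, B]" by (auto simp: length_2_conv)
      ultimately show "\<exists>(A, B)\<in>?R. u \<in> A \<and> v \<in> B"
        by (auto simp: in_listset_iff simp del: listset.simps)
    qed (auto simp: in_listset_iff simp del: listset.simps)
    finally show ?thesis .
  qed
  ultimately show ?thesis using that by blast
qed

lemma SF_UNIV: "UNIV \<in> SF G"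
proof -
  have "{[undefined]} \<union> - {[undefined]} \<in> SF G" by (intro SF.union SF.compl SF.letter)
  then show ?thesis by simp
qed

lemma SF_Int: "K \<in> SF G \<Longrightarrow> L \<in> SF G \<Longrightarrow> K \<inter> L \<in> SF G"
  using SF.compl[OF SF.union[OF SF.compl SF.compl]] by fastforce

lemma boolean_closed_SF: "boolean_closed (SF G)"
  by (simp add: boolean_closed_def SF_UNIV SF.compl SF_Int)

lemma SF_Union: "finite F \<Longrightarrow> F \<subseteq> SF G \<Longrightarrow> \<Union>F \<in> SF G"
  by (rule boolean_closed_Union[OF boolean_closed_SF])

lemma SF_Nil:
  assumes "finite (UNIV :: 'a set)"
  shows "{[] :: 'a list} \<in> SF G"
proof -
  have "(\<Union>a. {[a :: 'a]}) \<in> SF G"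
    using assms by (intro SF_Union) (auto intro: SF.letter)
  then have "- conc (\<Union>a. {[a :: 'a]}) UNIV \<in> SF G"
    by (intro SF.compl SF.concat SF_UNIV)
  moreover have "- conc (\<Union>a. {[a :: 'a]}) UNIV = {[]}"
    by (auto simp: conc_def neq_Nil_conv) (metis append_Cons append_Nil)
  ultimately show ?thesis by simp
qed

lemma append_in_conc_iff:
  "u @ v \<in> conc K L \<longleftrightarrow>
     (\<exists>x y. u = x @ y \<and> x \<in> K \<and> y @ v \<in> L) \<or> (\<exists>x y. v = x @ y \<and> u @ x \<in> K \<and> y \<in> L)"
proof
  assume "u @ v \<in> conc K L"
  then obtain x y where "u @ v = x @ y" "x \<in> K" "y \<in> L" by (auto simp: conc_def)
  then show "(\<exists>x y. u = x @ y \<and> x \<in> K \<and> y @ v \<in> L) \<or> (\<exists>x y. v = x @ y \<and> u @ x \<in> K \<and> y \<in> L)"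
    by (auto simp: append_eq_append_conv2)
next
  assume "(\<exists>x y. u = x @ y \<and> x \<in> K \<and> y @ v \<in> L) \<or> (\<exists>x y. v = x @ y \<and> u @ x \<in> K \<and> y \<in> L)"
  then show "u @ v \<in> conc K L"
    by (auto simp: conc_def) (metis append.assoc)+
qed

lemma append_in_conc_factorization:
  assumes "\<And>u v. u @ v \<in> K \<longleftrightarrow> (\<exists>(A, B)\<in>R. u \<in> A \<and> v \<in> B)"
    and "\<And>u v. u @ v \<in> L \<longleftrightarrow> (\<exists>(A, B)\<in>S. u \<in> A \<and> v \<in> B)"
  shows "u @ v \<in> conc K L \<longleftrightarrow>
    (\<exists>(A, B)\<in>(\<lambda>(A, B). (A, conc B L)) ` R \<union> (\<lambda>(A, B). (conc K A, B)) ` S. u \<in> A \<and> v \<in> B)"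
proof -
  have "(\<exists>x y. u = x @ y \<and> x \<in> K \<and> y @ v \<in> L) \<longleftrightarrow> (\<exists>(A, B)\<in>S. u \<in> conc K A \<and> v \<in> B)"
    by (auto simp: assms(2) conc_def)
  moreover have "(\<exists>x y. v = x @ y \<and> u @ x \<in> K \<and> y \<in> L) \<longleftrightarrow> (\<exists>(A, B)\<in>R. u \<in> A \<and> v \<in> conc B L)"
    by (auto simp: assms(1) conc_def)
  moreover have "(\<exists>(A, B)\<in>(\<lambda>(A, B). (A, conc B L)) ` R \<union> (\<lambda>(A, B). (conc K A, B)) ` S. u \<in> A \<and> v \<in> B)
      \<longleftrightarrow> (\<exists>(A, B)\<in>R. u \<in> A \<and> v \<in> conc B L) \<or> (\<exists>(A, B)\<in>S. u \<in> conc K A \<and> v \<in> B)"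
    by auto
  ultimately show ?thesis
    unfolding append_in_conc_iff by argo
qed

lemma group_language_append_recognizable:
  assumes "group_prevariety G" "L \<in> G"
  shows "recognizable (SF G) 2 {[u, v] | u v. u @ v \<in> L}"
proof -
  let ?R = "(\<lambda>X. ({u. lquot u L = X}, X)) ` range (\<lambda>q. lquot q L)"
  show ?thesis
  proof (rule recognizable_pairsI)
    show "finite ?R"
      using assms group_recognized_finite_lquots by (auto simp: group_prevariety_def)
    show "?R \<subseteq> SF G \<times> SF G"
      using assms by (auto intro!: SF.base group_prevariety_lquot_class group_prevariety_lquot)
    show "u @ v \<in> L \<longleftrightarrow> (\<exists>(A, B)\<in>?R. u \<in> A \<and> v \<in> B)" for u v
      by (auto simp: lquot_def)
  qed
qed

lemma letter_append_recognizable: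
  assumes "finite (UNIV :: 'a set)"
  shows "recognizable (SF G) 2 {[u, v] | u v. u @ v \<in> {[a :: 'a]}}"
proof (rule recognizable_pairsI)
  show "{({[]}, {[a]}), ({[a]}, {[]})} \<subseteq> SF G \<times> SF G"
    using SF_Nil[OF assms] by (auto intro: SF.letter)
  show "u @ v \<in> {[a]} \<longleftrightarrow> (\<exists>(A, B)\<in>{({[]}, {[a]}), ({[a]}, {[]})}. u \<in> A \<and> v \<in> B)" for u v
    by (auto simp: append_eq_Cons_conv)
qed simp

lemma SF_append_recognizable:
  assumes G: "group_prevariety G" and A: "finite (UNIV :: 'a set)" and K: "(K :: 'a lang) \<in> SF G"
  shows "recognizable (SF G) 2 {[u, v] | u v. u @ v \<in> K}"
  using K
proof (induction K rule: SF.induct)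
  case (base L)
  show ?case by (rule group_language_append_recognizable[OF G base])
next
  case (letter a)
  show ?case by (rule letter_append_recognizable[OF A])
next
  case (union K L)
  have "{[u, v] | u v. u @ v \<in> K \<union> L} = {[u, v] | u v. u @ v \<in> K} \<union> {[u, v] | u v. u @ v \<in> L}"
    by blast
  then show ?case using union.IH by (simp add: recognizable_Un)
next
  case (compl L)
  have "{[u, v] | u v. u @ v \<in> - L} = {xs. length xs = 2} - {[u, v] | u v. u @ v \<in> L}"
    by (auto simp: length_2_conv)
  then show ?case using compl.IH by (simp add: recognizable_compl boolean_closed_SF)
next
  case (concat K L)
  obtain R S where R: "finite R" "R \<subseteq> SF G \<times> SF G" "\<And>u v. u @ v \<in> K \<longleftrightarrow> (\<exists>(A, B)\<in>R. u \<in> A \<and> v \<in> B)"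
    and S: "finite S" "S \<subseteq> SF G \<times> SF G" "\<And>u v. u @ v \<in> L \<longleftrightarrow> (\<exists>(A, B)\<in>S. u \<in> A \<and> v \<in> B)"
    using concat.IH by (elim recognizable_pairsE) (rule that)
  show ?case
    by (rule recognizable_pairsI[OF _ _ append_in_conc_factorization[OF R(3) S(3)]])
      (use R S concat.hyps in \<open>auto intro: SF.concat\<close>)
qed

lemma SF_lquot_letter:
  assumes "group_prevariety G" "finite (UNIV :: 'a set)" "(K :: 'a lang) \<in> SF G"
  shows "lquot [c] K \<in> SF G"
proof -
  obtain R where R: "finite R" "R \<subseteq> SF G \<times> SF G" "\<And>u v. u @ v \<in> K \<longleftrightarrow> (\<exists>(A, B)\<in>R. u \<in> A \<and> v \<in> B)"
    using SF_append_recognizable[OF assms] by (rule recognizable_pairsE) (rule that)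
  have "lquot [c] K = \<Union>(snd ` {p \<in> R. [c] \<in> fst p})"
  proof (rule Set.set_eqI)
    fix v
    have "v \<in> lquot [c] K \<longleftrightarrow> (\<exists>p\<in>R. [c] \<in> fst p \<and> v \<in> snd p)"
      using R(3)[of "[c]" v] by (auto simp: lquot_def split_beta)
    then show "v \<in> lquot [c] K \<longleftrightarrow> v \<in> \<Union>(snd ` {p \<in> R. [c] \<in> fst p})"
      by blast
  qed
  also have "\<dots> \<in> SF G"
    using R(1,2) by (intro SF_Union) auto
  finally show ?thesis .
qed

lemma SF_letter_infix_recognizable:
  assumes "group_prevariety G" "finite (UNIV :: 'a set)" "(K :: 'a lang) \<in> SF G"
  shows "recognizable (SF G) 2 {[u, v] | u v. u @ c # v \<in> K}"
proof -
  obtain R where R: "finite R" "R \<subseteq> SF G \<times> SF G" "\<And>u v. u @ v \<in> K \<longleftrightarrow> (\<exists>(A, B)\<in>R. u \<in> A \<and> v \<in> B)"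
    using SF_append_recognizable[OF assms] by (rule recognizable_pairsE) (rule that)
  let ?R = "(\<lambda>(A, B). (A, lquot [c] B)) ` R"
  have infix_iff: "u @ c # v \<in> K \<longleftrightarrow> (\<exists>(A, B)\<in>?R. u \<in> A \<and> v \<in> B)" for u v
  proof -
    have "u @ c # v \<in> K \<longleftrightarrow> (\<exists>(A, B)\<in>R. u \<in> A \<and> v \<in> lquot [c] B)"
      using R(3)[of u "c # v"] by (simp add: lquot_def)
    also have "\<dots> \<longleftrightarrow> (\<exists>(A, B)\<in>?R. u \<in> A \<and> v \<in> B)"
      by fastforce
    finally show ?thesis .
  qed
  have "finite ?R" using R(1) by simp
  moreover have "?R \<subseteq> SF G \<times> SF G"
    using R(2) SF_lquot_letter[OF assms(1,2)] by auto
  ultimately show ?thesis using infix_iff by (rule recognizable_pairsI)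
qed

section \<open>Factored words\<close>

text \<open>\<open>glue [c\<^sub>1, \<dots>, c\<^sub>m] [u\<^sub>0, \<dots>, u\<^sub>m] = u\<^sub>0 c\<^sub>1 u\<^sub>1 \<dots> c\<^sub>m u\<^sub>m\<close>, and \<open>cut_pos us k\<close> is the
  position of \<open>c\<^sub>k\<close> in this word; \<open>k = 0\<close> and \<open>k = m + 1\<close> give \<open>min\<close> and \<open>max\<close>.\<close>

fun glue :: "'a list \<Rightarrow> 'a list list \<Rightarrow> 'a list" where
  "glue [] (u # us) = u"
| "glue (c # cs) (u # us) = u @ c # glue cs us"
| "glue cs [] = []"

definition cut_pos :: "'a list list \<Rightarrow> nat \<Rightarrow> nat" where
  "cut_pos us k = sum_list (map length (take k us)) + k"

lemma cut_pos_0 [simp]: "cut_pos us 0 = 0"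
  by (simp add: cut_pos_def)

lemma cut_pos_Cons_Suc [simp]: "cut_pos (u # us) (Suc k) = length u + 1 + cut_pos us k"
  by (simp add: cut_pos_def)

lemma cut_pos_mono: "k \<le> l \<Longrightarrow> cut_pos us k + (l - k) \<le> cut_pos us l"
  by (auto simp: cut_pos_def take_add dest!: le_Suc_ex)

lemma cut_pos_less_iff [simp]: "cut_pos us k < cut_pos us l \<longleftrightarrow> k < l"
  using cut_pos_mono[of k l us] cut_pos_mono[of l k us] by (cases k l rule: linorder_cases) auto

lemma cut_pos_eq_iff [simp]: "cut_pos us k = cut_pos us l \<longleftrightarrow> k = l"
  by (metis cut_pos_less_iff nat_neq_iff)

lemma cut_pos_ge: "k \<le> cut_pos us k"
  by (simp add: cut_pos_def)

lemma cut_pos_Suc_nth: "j < length us \<Longrightarrow> cut_pos us (Suc j) = cut_pos us j + length (us ! j) + 1"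
  by (simp add: cut_pos_def take_Suc_conv_app_nth)

lemma length_glue:
  "length us = Suc (length cs) \<Longrightarrow> length (glue cs us) = sum_list (map length us) + length cs"
  by (induction cs us rule: glue.induct) auto

lemma cut_pos_length: "length us = Suc (length cs) \<Longrightarrow> cut_pos us (length us) = length (glue cs us) + 1"
  by (simp add: cut_pos_def length_glue)

lemma glue_nth_cut_pos:
  "length us = Suc (length cs) \<Longrightarrow> 1 \<le> k \<Longrightarrow> k \<le> length cs \<Longrightarrow>
     glue cs us ! (cut_pos us k - 1) = cs ! (k - 1)"
proof (induction cs us arbitrary: k rule: glue.induct)
  case (2 c cs u us)
  then obtain k' where k: "k = Suc k'" by (cases k) auto
  show ?case
  proof (cases k')
    case (Suc k'')
    have "1 \<le> cut_pos us k'" using cut_pos_ge[of k' us] Suc by simp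
    then show ?thesis using 2 k Suc by (simp add: nth_append)
  qed (simp add: k nth_append)
qed auto

lemma take_glue_cut_pos:
  "length us = Suc (length cs) \<Longrightarrow> 1 \<le> k \<Longrightarrow> k \<le> length us \<Longrightarrow>
     take (cut_pos us k - 1) (glue cs us) = glue (take (k - 1) cs) (take k us)"
proof (induction cs us arbitrary: k rule: glue.induct)
  case (1 u us)
  then show ?case by (simp add: cut_pos_def)
next
  case (2 c cs u us)
  then obtain k' where k: "k = Suc k'" by (cases k) auto
  show ?case
  proof (cases k')
    case (Suc k'')
    have "1 \<le> cut_pos us k'" using cut_pos_ge[of k' us] Suc by simp
    then show ?thesis using 2 k Suc by (simp add: take_Cons')
  qed (simp add: k)
qed auto

lemma cut_pos_cases:
  assumes "i \<le> cut_pos us (length us)"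
  shows "(\<exists>k\<le>length us. i = cut_pos us k) \<or>
    (\<exists>j<length us. \<exists>u' c u''. us ! j = u' @ c # u'' \<and> i = cut_pos us j + length u' + 1)"
  using assms
proof (induction us arbitrary: i)
  case (Cons u us)
  consider "i = 0" | "1 \<le> i \<and> i \<le> length u" | "i = length u + 1" | "i > length u + 1"
    by linarith
  then show ?case
  proof cases
    case 1
    then show ?thesis by (intro disjI1 exI[of _ 0]) simp
  next
    case 2
    then have "i - 1 < length u" "Suc (i - 1) = i" by auto
    then have "u = take (i - 1) u @ u ! (i - 1) # drop i u"
      by (metis id_take_nth_drop)
    then show ?thesis using 2
      by (intro disjI2 exI[of _ 0] conjI exI[of _ "take (i - 1) u"] exI[of _ "u ! (i - 1)"]
          exI[of _ "drop i u"]) auto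
  next
    case 3
    then show ?thesis by (intro disjI1 exI[of _ 1]) simp
  next
    case 4
    define i' where "i' = i - length u - 1"
    then have i: "i = length u + 1 + i'" using 4 by simp
    then have "i' \<le> cut_pos us (length us)" using Cons.prems by simp
    then show ?thesis
    proof (rule Cons.IH[THEN disjE])
      assume "\<exists>k\<le>length us. i' = cut_pos us k"
      then obtain k where "k \<le> length us" "i' = cut_pos us k" by blast
      then show ?thesis using i by (intro disjI1 exI[of _ "Suc k"]) simp
    next
      assume "\<exists>j<length us. \<exists>u' c u''. us ! j = u' @ c # u'' \<and> i' = cut_pos us j + length u' + 1"
      then obtain j u' c u'' where "j < length us" "us ! j = u' @ c # u''" "i' = cut_pos us j + length u' + 1"
        by blast
      then show ?thesis using i by (intro disjI2 exI[of _ "Suc j"]) auto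
    qed
  qed
qed simp

lemma cut_pos_le_iff [simp]: "cut_pos us k \<le> cut_pos us l \<longleftrightarrow> k \<le> l"
  by (meson cut_pos_less_iff not_less)

lemma ex_position_glue_iff:
  assumes "length us = Suc (length cs)"
  shows "(\<exists>i\<le>length (glue cs us) + 1. Q i) \<longleftrightarrow>
    (\<exists>k\<le>length us. Q (cut_pos us k)) \<or>
    (\<exists>j<length us. \<exists>u' c u''. us ! j = u' @ c # u'' \<and> Q (cut_pos us j + length u' + 1))"
proof -
  have last: "length (glue cs us) + 1 = cut_pos us (length us)"
    using cut_pos_length[OF assms] by simp
  have inner: "cut_pos us j + length u' + 1 \<le> cut_pos us (length us)"
    if "j < length us" "us ! j = u' @ c # u''" for j u' c u''
  proof -
    have "cut_pos us j + length u' + 1 < cut_pos us (Suc j)"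
      using that by (simp add: cut_pos_Suc_nth)
    also have "\<dots> \<le> cut_pos us (length us)"
      using that(1) by simp
    finally show ?thesis by simp
  qed
  show ?thesis
    unfolding last
  proof
    assume "\<exists>i\<le>cut_pos us (length us). Q i"
    then obtain i where i: "i \<le> cut_pos us (length us)" "Q i" by blast
    with cut_pos_cases[OF i(1)] show "(\<exists>k\<le>length us. Q (cut_pos us k)) \<or>
        (\<exists>j<length us. \<exists>u' c u''. us ! j = u' @ c # u'' \<and> Q (cut_pos us j + length u' + 1))"
      by blast
  next
    assume "(\<exists>k\<le>length us. Q (cut_pos us k)) \<or>
        (\<exists>j<length us. \<exists>u' c u''. us ! j = u' @ c # u'' \<and> Q (cut_pos us j + length u' + 1))"
    then show "\<exists>i\<le>cut_pos us (length us). Q i"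
    proof (elim disjE exE conjE)
      fix k assume "k \<le> length us" "Q (cut_pos us k)"
      then show ?thesis by (intro exI[of _ "cut_pos us k"]) simp
    next
      fix j u' c u'' assume "j < length us" "us ! j = u' @ c # u''" "Q (cut_pos us j + length u' + 1)"
      then show ?thesis using inner by blast
    qed
  qed
qed

lemma SF_glue_recognizable:
  assumes "group_prevariety G" "finite (UNIV :: 'a set)" "(K :: 'a lang) \<in> SF G"
  shows "recognizable (SF G) (Suc (length cs)) {us. length us = Suc (length cs) \<and> glue cs us \<in> K}"
  using assms(3)
proof (induction cs arbitrary: K)
  case Nil
  have "{us. length us = Suc (length []) \<and> glue [] us \<in> K} = listset [K]"
    by (auto simp: in_listset_iff list_all2_Cons2 length_Suc_conv simp del: listset.simps)
  then show ?case using Nil by (simp add: recognizable_listset del: listset.simps)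
next
  case (Cons c cs)
  obtain R where R: "finite R" "R \<subseteq> SF G \<times> SF G"
    "\<And>u v. u @ c # v \<in> K \<longleftrightarrow> (\<exists>(A, B)\<in>R. u \<in> A \<and> v \<in> B)"
    using SF_letter_infix_recognizable[OF assms(1,2) Cons.prems, of c] by (rule recognizable_pairsE) (rule that)
  let ?glued = "\<lambda>B. {vs. length vs = Suc (length cs) \<and> glue cs vs \<in> B}"
  have "{us. length us = Suc (length (c # cs)) \<and> glue (c # cs) us \<in> K} =
      (\<Union>(A, B)\<in>R. set_Cons A (?glued B))"
  proof (rule Set.set_eqI)
    fix us
    show "us \<in> {us. length us = Suc (length (c # cs)) \<and> glue (c # cs) us \<in> K} \<longleftrightarrow>
        us \<in> (\<Union>(A, B)\<in>R. set_Cons A (?glued B))"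
      using R(3) by (cases us) (auto simp: set_Cons_def)
  qed
  moreover have "recognizable (SF G) (Suc (length (c # cs))) (\<Union>(A, B)\<in>R. set_Cons A (?glued B))"
    using R(1,2) Cons.IH by (intro recognizable_UN) (auto intro!: recognizable_set_Cons)
  ultimately show ?case by simp
qed

text \<open>Splitting the factor \<open>u\<^sub>j = u' c u''\<close> at its letter \<open>c\<close> turns that letter into a new
  cut with index \<open>j + 1\<close>; the old cut \<open>k\<close> gets the index \<open>shift_index j k\<close>.\<close>

definition split_factor :: "nat \<Rightarrow> 'a list \<Rightarrow> 'a list \<Rightarrow> 'a list list \<Rightarrow> 'a list list" where
  "split_factor j u' u'' us = take j us @ u' # u'' # drop (Suc j) us"

definition insert_nth :: "nat \<Rightarrow> 'a \<Rightarrow> 'a list \<Rightarrow> 'a list" where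
  "insert_nth j c cs = take j cs @ c # drop j cs"

definition shift_index :: "nat \<Rightarrow> nat \<Rightarrow> nat" where
  "shift_index j k = (if k \<le> j then k else Suc k)"

lemma shift_index_0 [simp]: "shift_index j 0 = 0"
  by (simp add: shift_index_def)

lemma shift_index_Suc_Suc [simp]: "shift_index (Suc j) (Suc k) = Suc (shift_index j k)"
  by (simp add: shift_index_def)

lemma split_factor_0_Cons [simp]: "split_factor 0 u' u'' (u # us) = u' # u'' # us"
  by (simp add: split_factor_def)

lemma split_factor_Suc_Cons [simp]:
  "split_factor (Suc j) u' u'' (u # us) = u # split_factor j u' u'' us"
  by (simp add: split_factor_def)

lemma length_split_factor: "j < length us \<Longrightarrow> length (split_factor j u' u'' us) = Suc (length us)"
  by (simp add: split_factor_def)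

lemma length_insert_nth: "j \<le> length cs \<Longrightarrow> length (insert_nth j c cs) = Suc (length cs)"
  by (simp add: insert_nth_def)

lemma glue_Cons_append: "glue cs ((x @ y) # us) = x @ glue cs (y # us)"
  by (cases cs) auto

lemma glue_split_factor:
  "j < length us \<Longrightarrow> length us = Suc (length cs) \<Longrightarrow> us ! j = u' @ c # u'' \<Longrightarrow>
     glue (insert_nth j c cs) (split_factor j u' u'' us) = glue cs us"
proof (induction j arbitrary: cs us)
  case 0
  then obtain us' where "us = (u' @ c # u'') # us'" by (cases us) auto
  then show ?case using glue_Cons_append[of cs "u' @ [c]" u'' us'] by (simp add: insert_nth_def)
next
  case (Suc j)
  then obtain u us' c' cs' where "us = u # us'" "cs = c' # cs'"
    by (cases us; cases cs) auto
  then show ?case using Suc by (simp add: insert_nth_def)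
qed

lemma cut_pos_split_factor_shift:
  "j < length us \<Longrightarrow> us ! j = u' @ c # u'' \<Longrightarrow>
     cut_pos (split_factor j u' u'' us) (shift_index j k) = cut_pos us k"
proof (induction j arbitrary: us k)
  case 0
  then obtain us' where "us = (u' @ c # u'') # us'" by (cases us) auto
  then show ?case by (cases k) (simp_all add: shift_index_def)
next
  case (Suc j)
  then obtain u us' where "us = u # us'" by (cases us) auto
  then show ?case using Suc by (cases k) simp_all
qed

lemma cut_pos_split_factor_new:
  "j < length us \<Longrightarrow> cut_pos (split_factor j u' u'' us) (Suc j) = cut_pos us j + length u' + 1"
  by (simp add: split_factor_def cut_pos_def)

definition merge_at :: "nat \<Rightarrow> 'a \<Rightarrow> 'a lang list \<Rightarrow> 'a lang list" where
  "merge_at j c As = take j As @ conc (As ! j) (conc {[c]} (As ! Suc j)) # drop (Suc (Suc j)) As"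

lemma length_merge_at: "Suc j < length As \<Longrightarrow> length (merge_at j c As) = length As - 1"
  by (simp add: merge_at_def)

lemma split_factor_in_listset_iff:
  assumes "length As = Suc (Suc m)" "j \<le> m" "length us = Suc m"
  shows "(\<exists>u' u''. us ! j = u' @ c # u'' \<and> split_factor j u' u'' us \<in> listset As) \<longleftrightarrow>
    us \<in> listset (merge_at j c As)"
proof -
  have As: "As = take j As @ As ! j # As ! Suc j # drop (Suc (Suc j)) As"
    using assms(1,2) by (simp add: Cons_nth_drop_Suc)
  have us: "us = take j us @ us ! j # drop (Suc j) us"
    using assms(2,3) by (simp add: id_take_nth_drop)
  have len: "length (take j us) = length (take j As)"
    using assms by simp
  have "list_all2 (\<in>) (split_factor j u' u'' us) As \<longleftrightarrow>
      list_all2 (\<in>) (take j us) (take j As) \<and> u' \<in> As ! j \<and> u'' \<in> As ! Suc j \<and>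
      list_all2 (\<in>) (drop (Suc j) us) (drop (Suc (Suc j)) As)" for u' u''
    unfolding split_factor_def by (subst As) (simp add: list_all2_append[OF len])
  moreover have "list_all2 (\<in>) us (merge_at j c As) \<longleftrightarrow>
      list_all2 (\<in>) (take j us) (take j As) \<and> us ! j \<in> conc (As ! j) (conc {[c]} (As ! Suc j)) \<and>
      list_all2 (\<in>) (drop (Suc j) us) (drop (Suc (Suc j)) As)"
    unfolding merge_at_def by (subst us) (simp add: list_all2_append[OF len])
  ultimately show ?thesis
    by (auto simp: in_listset_iff conc_def)
qed

lemma recognizable_merge:
  assumes "recognizable (SF G) (Suc (Suc m)) S" "j \<le> m"
  shows "recognizable (SF G) (Suc m)
    {us. length us = Suc m \<and> (\<exists>u' u''. us ! j = u' @ c # u'' \<and> split_factor j u' u'' us \<in> S)}"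
proof -
  obtain R where R: "finite R" "\<forall>As\<in>R. length As = Suc (Suc m) \<and> set As \<subseteq> SF G"
    "S = \<Union>(listset ` R)"
    using assms(1) unfolding recognizable_def by blast
  have "{us. length us = Suc m \<and> (\<exists>u' u''. us ! j = u' @ c # u'' \<and> split_factor j u' u'' us \<in> S)} =
      (\<Union>As\<in>R. {us. length us = Suc m \<and>
        (\<exists>u' u''. us ! j = u' @ c # u'' \<and> split_factor j u' u'' us \<in> listset As)})"
    unfolding R(3) by blast
  also have "\<dots> = \<Union>(listset ` merge_at j c ` R)"
  proof -
    have "{us. length us = Suc m \<and>
        (\<exists>u' u''. us ! j = u' @ c # u'' \<and> split_factor j u' u'' us \<in> listset As)} =
        listset (merge_at j c As)" if "As \<in> R" for As
    proof -
      have "length As = Suc (Suc m)" using R(2) that by blast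
      then have "us \<in> listset (merge_at j c As) \<Longrightarrow> length us = Suc m" for us
        using assms(2) by (auto simp: in_listset_iff length_merge_at dest!: list_all2_lengthD)
      then show ?thesis
        using split_factor_in_listset_iff[OF \<open>length As = Suc (Suc m)\<close> assms(2)] by blast
    qed
    then show ?thesis by auto
  qed
  moreover have "length Bs = Suc m \<and> set Bs \<subseteq> SF G" if Bs: "Bs \<in> merge_at j c ` R" for Bs
  proof -
    obtain As where As: "As \<in> R" "Bs = merge_at j c As" using Bs by blast
    then have len: "length As = Suc (Suc m)" and sub: "set As \<subseteq> SF G" using R(2) by auto
    then have "As ! j \<in> SF G" "As ! Suc j \<in> SF G"
      using assms(2) by (auto intro!: subsetD[OF sub] nth_mem)
    then show ?thesis
      using As len sub assms(2) by (auto simp: merge_at_def intro!: SF.concat SF.letter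
          dest: in_set_takeD in_set_dropD)
  qed
  ultimately show ?thesis
    unfolding recognizable_def using R(1) by (intro exI[of _ "merge_at j c ` R"]) auto
qed

section \<open>From formulas to star-free languages\<close>

text \<open>The assignment places variable \<open>x\<close> on the cut with index \<open>f x\<close>.\<close>

definition decomposable :: "'a lang set \<Rightarrow> ('a list \<Rightarrow> (nat \<Rightarrow> nat) \<Rightarrow> bool) \<Rightarrow> bool" where
  "decomposable C P \<longleftrightarrow> (\<forall>m f (cs :: 'a list). (\<forall>x. f x \<le> Suc m) \<longrightarrow> length cs = m \<longrightarrow>
     recognizable C (Suc m) {us. length us = Suc m \<and> P (glue cs us) (\<lambda>x. cut_pos us (f x))})"

lemma decomposableI:
  "(\<And>m f (cs :: 'a list). \<forall>x. f x \<le> Suc m \<Longrightarrow> length cs = m \<Longrightarrow>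
     recognizable C (Suc m) {us. length us = Suc m \<and> P (glue cs us) (\<lambda>x. cut_pos us (f x))}) \<Longrightarrow>
   decomposable C P"
  unfolding decomposable_def by blast

lemma decomposableD:
  "decomposable C P \<Longrightarrow> \<forall>x. f x \<le> Suc m \<Longrightarrow> length (cs :: 'a list) = m \<Longrightarrow>
     recognizable C (Suc m) {us. length us = Suc m \<and> P (glue cs us) (\<lambda>x. cut_pos us (f x))}"
  unfolding decomposable_def by blast

lemma decomposable_const_cuts:
  assumes "UNIV \<in> C"
    and "\<And>m f cs us. \<forall>x. f x \<le> Suc m \<Longrightarrow> length (cs :: 'a list) = m \<Longrightarrow> length us = Suc m \<Longrightarrow>
      P (glue cs us) (\<lambda>x. cut_pos us (f x)) = Q m f cs"
  shows "decomposable C P"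
proof (rule decomposableI)
  fix m and f :: "nat \<Rightarrow> nat" and cs :: "'a list"
  assume "\<forall>x. f x \<le> Suc m" "length cs = m"
  then have "{us. length us = Suc m \<and> P (glue cs us) (\<lambda>x. cut_pos us (f x))} =
      {us. length us = Suc m \<and> Q m f cs}"
    using assms(2) by auto
  then show "recognizable C (Suc m) {us. length us = Suc m \<and> P (glue cs us) (\<lambda>x. cut_pos us (f x))}"
    using recognizable_const[OF assms(1)] by simp
qed

lemma decomposable_Not:
  assumes "boolean_closed C" "decomposable C P"
  shows "decomposable C (\<lambda>w \<sigma>. \<not> P w \<sigma>)"
proof (rule decomposableI)
  fix m and f :: "nat \<Rightarrow> nat" and cs :: "'a list"
  assume "\<forall>x. f x \<le> Suc m" "length cs = m"
  then have "recognizable C (Suc m)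
      ({us. length us = Suc m} - {us. length us = Suc m \<and> P (glue cs us) (\<lambda>x. cut_pos us (f x))})"
    using assms by (intro recognizable_compl decomposableD)
  moreover have "{us. length us = Suc m} - {us. length us = Suc m \<and> P (glue cs us) (\<lambda>x. cut_pos us (f x))}
      = {us. length us = Suc m \<and> \<not> P (glue cs us) (\<lambda>x. cut_pos us (f x))}"
    by auto
  ultimately show "recognizable C (Suc m)
      {us. length us = Suc m \<and> \<not> P (glue cs us) (\<lambda>x. cut_pos us (f x))}"
    by simp
qed

lemma decomposable_conj:
  assumes "boolean_closed C" "decomposable C P" "decomposable C Q"
  shows "decomposable C (\<lambda>w \<sigma>. P w \<sigma> \<and> Q w \<sigma>)"
proof (rule decomposableI)
  fix m and f :: "nat \<Rightarrow> nat" and cs :: "'a list"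
  assume "\<forall>x. f x \<le> Suc m" "length cs = m"
  then have "recognizable C (Suc m)
      ({us. length us = Suc m \<and> P (glue cs us) (\<lambda>x. cut_pos us (f x))} \<inter>
       {us. length us = Suc m \<and> Q (glue cs us) (\<lambda>x. cut_pos us (f x))})"
    using assms by (intro recognizable_Int decomposableD) (auto simp: boolean_closed_def)
  then show "recognizable C (Suc m) {us. length us = Suc m \<and>
      P (glue cs us) (\<lambda>x. cut_pos us (f x)) \<and> Q (glue cs us) (\<lambda>x. cut_pos us (f x))}"
    by (simp add: Collect_conj_eq[symmetric] conj_commute conj_left_commute)
qed

lemma decomposable_disj:
  assumes "decomposable C P" "decomposable C Q"
  shows "decomposable C (\<lambda>w \<sigma>. P w \<sigma> \<or> Q w \<sigma>)"
proof (rule decomposableI)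
  fix m and f :: "nat \<Rightarrow> nat" and cs :: "'a list"
  assume "\<forall>x. f x \<le> Suc m" "length cs = m"
  then have "recognizable C (Suc m)
      ({us. length us = Suc m \<and> P (glue cs us) (\<lambda>x. cut_pos us (f x))} \<union>
       {us. length us = Suc m \<and> Q (glue cs us) (\<lambda>x. cut_pos us (f x))})"
    using assms by (intro recognizable_Un decomposableD)
  moreover have "{us. length us = Suc m \<and> P (glue cs us) (\<lambda>x. cut_pos us (f x))} \<union>
       {us. length us = Suc m \<and> Q (glue cs us) (\<lambda>x. cut_pos us (f x))} =
      {us. length us = Suc m \<and> (P (glue cs us) (\<lambda>x. cut_pos us (f x)) \<or> Q (glue cs us) (\<lambda>x. cut_pos us (f x)))}"
    by auto
  ultimately show "recognizable C (Suc m) {us. length us = Suc m \<and>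
      (P (glue cs us) (\<lambda>x. cut_pos us (f x)) \<or> Q (glue cs us) (\<lambda>x. cut_pos us (f x)))}"
    by simp
qed

text \<open>A new variable \<open>x\<close> either sits on an existing cut, or on a letter \<open>c\<close> of some factor,
  which becomes a new cut once that factor is split.\<close>
lemma ex_position_split_iff:
  assumes "length us = Suc (length cs)"
  shows "(\<exists>i\<le>length (glue cs us) + 1. P (glue cs us) ((\<lambda>y. cut_pos us (f y))(x := i))) \<longleftrightarrow>
    (\<exists>k\<le>length us. P (glue cs us) (\<lambda>y. cut_pos us ((f(x := k)) y))) \<or>
    (\<exists>j<length us. \<exists>u' c u''. us ! j = u' @ c # u'' \<and>
      P (glue (insert_nth j c cs) (split_factor j u' u'' us))
        (\<lambda>y. cut_pos (split_factor j u' u'' us) (if y = x then Suc j else shift_index j (f y))))"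
proof -
  have cut: "(\<lambda>y. cut_pos us (f y))(x := cut_pos us k) = (\<lambda>y. cut_pos us ((f(x := k)) y))" for k
    by auto
  have letter: "P (glue cs us) ((\<lambda>y. cut_pos us (f y))(x := cut_pos us j + length u' + 1)) \<longleftrightarrow>
      P (glue (insert_nth j c cs) (split_factor j u' u'' us))
        (\<lambda>y. cut_pos (split_factor j u' u'' us) (if y = x then Suc j else shift_index j (f y)))"
    if "j < length us" "us ! j = u' @ c # u''" for j u' c u''
  proof -
    have "(\<lambda>y. cut_pos us (f y))(x := cut_pos us j + length u' + 1) =
        (\<lambda>y. cut_pos (split_factor j u' u'' us) (if y = x then Suc j else shift_index j (f y)))"
      by (rule ext) (simp add: cut_pos_split_factor_shift[OF that] cut_pos_split_factor_new[OF that(1)])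
    then show ?thesis
      using glue_split_factor[OF that(1) assms that(2)] by simp
  qed
  show ?thesis
    unfolding ex_position_glue_iff[OF assms] cut using letter by blast
qed

lemma decomposable_Ex:
  assumes "group_prevariety G" "finite (UNIV :: 'a set)"
    and P: "decomposable (SF G) (P :: 'a list \<Rightarrow> (nat \<Rightarrow> nat) \<Rightarrow> bool)"
  shows "decomposable (SF G) (\<lambda>w \<sigma>. \<exists>i\<le>length w + 1. P w (\<sigma>(x := i)))"
proof (rule decomposableI)
  fix m and f :: "nat \<Rightarrow> nat" and cs :: "'a list"
  assume f: "\<forall>y. f y \<le> Suc m" and cs: "length cs = m"
  define f' where "f' j y = (if y = x then Suc j else shift_index j (f y))" for j y
  define A where "A k = {us. length us = Suc m \<and> P (glue cs us) (\<lambda>y. cut_pos us ((f(x := k)) y))}"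
    for k
  define S where "S j c = {vs. length vs = Suc (Suc m) \<and>
    P (glue (insert_nth j c cs) vs) (\<lambda>y. cut_pos vs (f' j y))}" for j c
  define B where "B j c = {us. length us = Suc m \<and>
    (\<exists>u' u''. us ! j = u' @ c # u'' \<and> split_factor j u' u'' us \<in> S j c)}" for j c
  have "recognizable (SF G) (Suc m) (A k)" if "k \<le> Suc m" for k
    unfolding A_def using that f cs by (intro decomposableD[OF P]) auto
  moreover have "recognizable (SF G) (Suc m) (B j c)" if "j \<le> m" for j c
  proof -
    have "recognizable (SF G) (Suc (Suc m)) (S j c)"
      unfolding S_def using that f cs
      by (intro decomposableD[OF P]) (auto simp: f'_def shift_index_def length_insert_nth)
    then show ?thesis unfolding B_def using that by (rule recognizable_merge)
  qed
  ultimately have "recognizable (SF G) (Suc m) ((\<Union>k\<le>Suc m. A k) \<union> (\<Union>j\<le>m. \<Union>c. B j c))"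
    using assms(2) by (intro recognizable_Un recognizable_UN) auto
  moreover have "{us. length us = Suc m \<and>
      (\<exists>i\<le>length (glue cs us) + 1. P (glue cs us) ((\<lambda>y. cut_pos us (f y))(x := i)))} =
      (\<Union>k\<le>Suc m. A k) \<union> (\<Union>j\<le>m. \<Union>c. B j c)"
  proof (rule Set.set_eqI)
    fix us
    show "us \<in> {us. length us = Suc m \<and>
        (\<exists>i\<le>length (glue cs us) + 1. P (glue cs us) ((\<lambda>y. cut_pos us (f y))(x := i)))} \<longleftrightarrow>
      us \<in> (\<Union>k\<le>Suc m. A k) \<union> (\<Union>j\<le>m. \<Union>c. B j c)"
    proof (cases "length us = Suc m")
      case True
      then show ?thesis
        using ex_position_split_iff[of us cs P f x] cs
        by (auto simp: A_def B_def S_def f'_def length_split_factor less_Suc_eq_le)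
    qed (auto simp: A_def B_def)
  qed
  ultimately show "recognizable (SF G) (Suc m) {us. length us = Suc m \<and>
      (\<exists>i\<le>length (glue cs us) + 1. P (glue cs us) ((\<lambda>y. cut_pos us (f y))(x := i)))}"
    by simp
qed

fun cut_index :: "(nat \<Rightarrow> nat) \<Rightarrow> nat \<Rightarrow> fo_term \<Rightarrow> nat" where
  "cut_index f m (Var x) = f x"
| "cut_index f m Min = 0"
| "cut_index f m Max = Suc m"

lemma cut_index_le: "\<forall>x. f x \<le> Suc m \<Longrightarrow> cut_index f m t \<le> Suc m"
  by (cases t) auto

lemma tval_glue:
  "length us = Suc m \<Longrightarrow> length (cs :: 'a list) = m \<Longrightarrow>
     tval (glue cs us) (\<lambda>x. cut_pos us (f x)) t = cut_pos us (cut_index f m t)"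
  using cut_pos_length[of us cs] by (cases t) auto

lemma decomposable_Lab: "decomposable (SF G) (\<lambda>w \<sigma>. sat w \<sigma> (Lab a t))"
proof (rule decomposable_const_cuts[OF SF_UNIV,
      where Q = "\<lambda>m f cs. 1 \<le> cut_index f m t \<and> cut_index f m t \<le> m \<and> cs ! (cut_index f m t - 1) = a"])
  fix m and f :: "nat \<Rightarrow> nat" and cs :: "'a list" and us :: "'a list list"
  assume f: "\<forall>x. f x \<le> Suc m" and cs: "length cs = m" and us: "length us = Suc m"
  define k where "k = cut_index f m t"
  have "1 \<le> cut_pos us k \<longleftrightarrow> 1 \<le> k"
    using cut_pos_ge[of k us] by (cases k) auto
  moreover have "cut_pos us k \<le> length (glue cs us) \<longleftrightarrow> k \<le> m"
    using cut_pos_length[of us cs] cs us cut_pos_less_iff[of us k "Suc m"] by (simp add: less_Suc_eq_le)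
  ultimately show "sat (glue cs us) (\<lambda>x. cut_pos us (f x)) (Lab a t) \<longleftrightarrow>
      1 \<le> cut_index f m t \<and> cut_index f m t \<le> m \<and> cs ! (cut_index f m t - 1) = a"
    using tval_glue[OF us cs] glue_nth_cut_pos[of us cs k] cs us
    by (auto simp: Let_def k_def)
qed

lemma decomposable_Pred:
  assumes "group_prevariety G" "finite (UNIV :: 'a set)" "(L :: 'a lang) \<in> G"
  shows "decomposable (SF G) (\<lambda>w \<sigma>. sat w \<sigma> (Pred L t))"
proof (rule decomposableI)
  fix m and f :: "nat \<Rightarrow> nat" and cs :: "'a list"
  assume f: "\<forall>x. f x \<le> Suc m" and cs: "length cs = m"
  define k where "k = cut_index f m t"
  have k: "k \<le> Suc m" using cut_index_le[OF f] by (simp add: k_def)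
  show "recognizable (SF G) (Suc m)
      {us. length us = Suc m \<and> sat (glue cs us) (\<lambda>x. cut_pos us (f x)) (Pred L t)}"
  proof (cases "k = 0")
    case True
    then have "{us. length us = Suc m \<and> sat (glue cs us) (\<lambda>x. cut_pos us (f x)) (Pred L t)} =
        {us. length us = Suc m \<and> False}"
      using tval_glue[OF _ cs] by (auto simp: k_def)
    then show ?thesis using recognizable_const[OF SF_UNIV, where n = "Suc m" and P = False] by (simp only:)
  next
    case False
    let ?prefixes = "{vs. length vs = Suc (length (take (k - 1) cs)) \<and> glue (take (k - 1) cs) vs \<in> L}"
    have sat_iff: "sat (glue cs us) (\<lambda>x. cut_pos us (f x)) (Pred L t) \<longleftrightarrow> take k us \<in> ?prefixes"
      if us: "length us = Suc m" for us
    proof -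
      have "0 < cut_pos us k" using cut_pos_ge[of k us] False by simp
      moreover have "infix_word (glue cs us) 0 (cut_pos us k) = glue (take (k - 1) cs) (take k us)"
        using take_glue_cut_pos[of us cs k] us cs k False by (simp add: infix_word_def)
      ultimately show ?thesis
        using tval_glue[OF us cs] us cs k False by (simp add: k_def[symmetric] Let_def)
    qed
    have "recognizable (SF G) (Suc m) {us. length us = Suc m \<and> take k us \<in> ?prefixes}"
    proof (rule recognizable_take[OF SF_UNIV _ k])
      show "recognizable (SF G) k ?prefixes"
        using SF_glue_recognizable[OF assms(1,2) SF.base[OF assms(3)], of "take (k - 1) cs"]
          False k cs by simp
    qed
    moreover have "{us. length us = Suc m \<and> sat (glue cs us) (\<lambda>x. cut_pos us (f x)) (Pred L t)} =
        {us. length us = Suc m \<and> take k us \<in> ?prefixes}"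
      using sat_iff by blast
    ultimately show ?thesis by (simp only:)
  qed
qed

lemma FO_decomposable:
  assumes "group_prevariety G" "finite (UNIV :: 'a set)" "preds (\<phi> :: 'a fo) \<subseteq> G"
  shows "decomposable (SF G) (\<lambda>w \<sigma>. sat w \<sigma> \<phi>)"
  using assms(3)
proof (induction \<phi>)
  case (Eq s t)
  show ?case
    by (rule decomposable_const_cuts[OF SF_UNIV, where Q = "\<lambda>m f cs. cut_index f m s = cut_index f m t"])
      (simp add: tval_glue)
next
  case (Less s t)
  show ?case
    by (rule decomposable_const_cuts[OF SF_UNIV, where Q = "\<lambda>m f cs. cut_index f m s < cut_index f m t"])
      (simp add: tval_glue)
next
  case (Lab a t)
  show ?case by (rule decomposable_Lab)
next
  case (Pred L t)
  then show ?case using decomposable_Pred[OF assms(1,2)] by simp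
next
  case (Neg \<phi>)
  then show ?case using decomposable_Not[OF boolean_closed_SF] by simp
next
  case (Conj \<phi> \<psi>)
  then show ?case using decomposable_conj[OF boolean_closed_SF] by simp
next
  case (Disj \<phi> \<psi>)
  then show ?case using decomposable_disj by simp
next
  case (Ex x \<phi>)
  then show ?case using decomposable_Ex[OF assms(1,2)] by simp
next
  case (All x \<phi>)
  then have "decomposable (SF G) (\<lambda>w \<sigma>. \<not> (\<exists>i\<le>length w + 1. \<not> sat w (\<sigma>(x := i)) \<phi>))"
    by (intro decomposable_Not[OF boolean_closed_SF] decomposable_Ex[OF assms(1,2)]) simp
  then show ?case by simp
qed

lemma FO_subset_SF:
  assumes "group_prevariety G" "finite (UNIV :: 'a set)"
  shows "FO_less_P G \<subseteq> SF (G :: 'a lang set)"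
proof
  fix K assume "K \<in> FO_less_P G"
  then obtain \<phi> :: "'a fo" where \<phi>: "K = lang_of \<phi>" "preds \<phi> \<subseteq> G"
    by (auto simp: FO_less_P_def)
  have "recognizable (SF G) 1 {us. length us = 1 \<and> sat (glue [] us) (\<lambda>x. cut_pos us 0) \<phi>}"
    using decomposableD[OF FO_decomposable[OF assms \<phi>(2)], of "\<lambda>_. 0" 0 "[]"] by simp
  then have "{u. [u] \<in> {us. length us = 1 \<and> sat (glue [] us) (\<lambda>x. cut_pos us 0) \<phi>}} \<in> SF G"
    by (rule recognizable_singletons[OF boolean_closed_SF])
  then show "K \<in> SF G" by (simp add: \<phi>(1) lang_of_def)
qed

section \<open>From star-free languages to formulas\<close>

text \<open>\<open>segment w a b\<close> is the factor of \<open>w\<close> consisting of the letters at positions \<open>a, \<dots>, b - 1\<close>.\<close>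

definition segment :: "'a list \<Rightarrow> nat \<Rightarrow> nat \<Rightarrow> 'a list" where
  "segment w a b = take (b - a) (drop (a - 1) w)"

lemma length_segment: "1 \<le> a \<Longrightarrow> a \<le> b \<Longrightarrow> b \<le> length w + 1 \<Longrightarrow> length (segment w a b) = b - a"
  by (simp add: segment_def)

lemma segment_append: "1 \<le> a \<Longrightarrow> a \<le> i \<Longrightarrow> i \<le> b \<Longrightarrow> segment w a i @ segment w i b = segment w a b"
proof -
  assume "1 \<le> a" "a \<le> i" "i \<le> b"
  then have "b - a = (i - a) + (b - i)" "drop (i - a) (drop (a - 1) w) = drop (i - 1) w" by auto
  then show ?thesis by (simp add: segment_def take_add)
qed

lemma prefix_append_segment:
  "1 \<le> a \<Longrightarrow> a \<le> b \<Longrightarrow> infix_word w 0 a @ segment w a b = infix_word w 0 b"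
proof -
  assume "1 \<le> a" "a \<le> b"
  then have "b - 1 = (a - 1) + (b - a)" by simp
  then show ?thesis by (simp add: infix_word_def segment_def take_add)
qed

fun var_bound :: "fo_term \<Rightarrow> nat" where
  "var_bound (Var x) = x"
| "var_bound Min = 0"
| "var_bound Max = 0"

definition fresh_var :: "fo_term \<Rightarrow> fo_term \<Rightarrow> nat" where
  "fresh_var s t = var_bound s + var_bound t + 1"

lemma fresh_var_notin: "fresh_var s t \<notin> tvars s" "fresh_var s t \<notin> tvars t"
  by (cases s; cases t; simp add: fresh_var_def)+

lemma tval_fun_upd: "z \<notin> tvars s \<Longrightarrow> tval w (\<sigma>(z := i)) s = tval w \<sigma> s"
  by (cases s) auto

fun disjs :: "'a fo list \<Rightarrow> 'a fo" where
  "disjs [] = Neg (Eq Min Min)"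
| "disjs (\<phi> # \<phi>s) = Disj \<phi> (disjs \<phi>s)"

lemma sat_disjs: "sat w \<sigma> (disjs \<phi>s) \<longleftrightarrow> (\<exists>\<phi>\<in>set \<phi>s. sat w \<sigma> \<phi>)"
  by (induction \<phi>s) auto

lemma free_vars_disjs: "free_vars (disjs \<phi>s) = (\<Union>\<phi>\<in>set \<phi>s. free_vars \<phi>)"
  by (induction \<phi>s) auto

lemma preds_disjs: "preds (disjs \<phi>s) = (\<Union>\<phi>\<in>set \<phi>s. preds \<phi>)"
  by (induction \<phi>s) auto

definition defines_segment :: "'a lang set \<Rightarrow> 'a lang \<Rightarrow> fo_term \<Rightarrow> fo_term \<Rightarrow> 'a fo \<Rightarrow> bool" where
  "defines_segment G K s t \<psi> \<longleftrightarrow> free_vars \<psi> \<subseteq> tvars s \<union> tvars t \<and> preds \<psi> \<subseteq> G \<and>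
     (\<forall>w \<sigma>. 1 \<le> tval w \<sigma> s \<longrightarrow> tval w \<sigma> s \<le> tval w \<sigma> t \<longrightarrow> tval w \<sigma> t \<le> length w + 1 \<longrightarrow>
        (sat w \<sigma> \<psi> \<longleftrightarrow> segment w (tval w \<sigma> s) (tval w \<sigma> t) \<in> K))"

lemma group_recognized_mem_iff:
  assumes "group_recognized L"
  shows "s \<in> L \<longleftrightarrow> (\<exists>r. p \<in> lquot r {u. lquot u L = L} \<and> p @ s \<in> lquot r L)"
proof
  assume "s \<in> L"
  obtain r where "lquot (r @ p) L = L"
    using group_recognized_lquot_inverse[OF assms] by blast
  then show "\<exists>r. p \<in> lquot r {u. lquot u L = L} \<and> p @ s \<in> lquot r L"
    using \<open>s \<in> L\<close> by (auto simp: lquot_def set_eq_iff)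
next
  assume "\<exists>r. p \<in> lquot r {u. lquot u L = L} \<and> p @ s \<in> lquot r L"
  then obtain r where "lquot (r @ p) L = L" "(r @ p) @ s \<in> L"
    by (auto simp: lquot_def)
  then show "s \<in> L" by (metis lquot_def mem_Collect_eq)
qed

lemma group_language_defines_segment:
  assumes "group_prevariety G" "L \<in> G"
  shows "\<exists>\<psi>. defines_segment G L s t \<psi>"
proof -
  let ?D = "{u. lquot u L = L}"
  let ?R = "range (\<lambda>r. (lquot r ?D, lquot r L))"
  have "?D \<in> G"
    using group_prevariety_lquot_class[OF assms, of "[]"] by (simp add: lquot_def)
  then have "finite (range (\<lambda>r. lquot r ?D))" "finite (range (\<lambda>r. lquot r L))"
    using assms by (auto simp: group_prevariety_def intro: group_recognized_finite_lquots)
  then have "finite ?R"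
    by (rule finite_subset[rotated, OF finite_cartesian_product]) auto
  then obtain XYs where XYs: "set XYs = ?R" using finite_list by blast
  define \<psi> where "\<psi> = disjs (map (\<lambda>(X, Y). Conj (Pred X s) (Pred Y t)) XYs)"
  have "defines_segment G L s t \<psi>"
    unfolding defines_segment_def
  proof (intro conjI allI impI)
    show "free_vars \<psi> \<subseteq> tvars s \<union> tvars t"
      by (auto simp: \<psi>_def free_vars_disjs)
    show "preds \<psi> \<subseteq> G"
      using \<open>?D \<in> G\<close> assms by (auto simp: \<psi>_def preds_disjs XYs intro: group_prevariety_lquot)
    fix w :: "'a list" and \<sigma>
    assume h: "1 \<le> tval w \<sigma> s" "tval w \<sigma> s \<le> tval w \<sigma> t" "tval w \<sigma> t \<le> length w + 1"
    have "sat w \<sigma> \<psi> \<longleftrightarrow> (\<exists>r. infix_word w 0 (tval w \<sigma> s) \<in> lquot r ?D \<and>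
        infix_word w 0 (tval w \<sigma> t) \<in> lquot r L)"
      using h by (auto simp: \<psi>_def sat_disjs XYs Let_def)
    also have "\<dots> \<longleftrightarrow> segment w (tval w \<sigma> s) (tval w \<sigma> t) \<in> L"
      using group_recognized_mem_iff[of L "segment w (tval w \<sigma> s) (tval w \<sigma> t)"
          "infix_word w 0 (tval w \<sigma> s)"] prefix_append_segment[OF h(1,2), of w] assms
      by (simp add: group_prevariety_def)
    finally show "sat w \<sigma> \<psi> \<longleftrightarrow> segment w (tval w \<sigma> s) (tval w \<sigma> t) \<in> L" .
  qed
  then show ?thesis ..
qed

lemma segment_eq_singleton_iff:
  assumes "1 \<le> a" "a \<le> b" "b \<le> length w + 1"
  shows "segment w a b = [c] \<longleftrightarrow> b = Suc a \<and> a \<le> length w \<and> w ! (a - 1) = c"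
proof
  assume seg: "segment w a b = [c]"
  then have "b = Suc a" using length_segment[OF assms] assms(2) by simp
  moreover have "a \<le> length w" using \<open>b = Suc a\<close> assms(3) by simp
  moreover have "w ! (a - 1) = c"
    using seg \<open>b = Suc a\<close> \<open>a \<le> length w\<close> assms(1) by (simp add: segment_def take_Suc_conv_app_nth)
  ultimately show "b = Suc a \<and> a \<le> length w \<and> w ! (a - 1) = c" by blast
next
  assume "b = Suc a \<and> a \<le> length w \<and> w ! (a - 1) = c"
  then show "segment w a b = [c]"
    using assms(1) by (auto simp: segment_def take_Suc_conv_app_nth)
qed

lemma letter_defines_segment: "\<exists>\<psi>. defines_segment G {[c]} s t \<psi>"
proof -
  define z where "z = fresh_var s t"
  define \<psi> :: "'a fo" where
    "\<psi> = Conj (Less s t) (Conj (Neg (Ex z (Conj (Less s (Var z)) (Less (Var z) t)))) (Lab c s))"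
  have "defines_segment G {[c]} s t \<psi>"
    unfolding defines_segment_def
  proof (intro conjI allI impI)
    show "free_vars \<psi> \<subseteq> tvars s \<union> tvars t" "preds \<psi> \<subseteq> G"
      by (auto simp: \<psi>_def)
    fix w :: "'a list" and \<sigma>
    assume h: "1 \<le> tval w \<sigma> s" "tval w \<sigma> s \<le> tval w \<sigma> t" "tval w \<sigma> t \<le> length w + 1"
    define a b where "a = tval w \<sigma> s" and "b = tval w \<sigma> t"
    have "tval w (\<sigma>(z := i)) s = a" "tval w (\<sigma>(z := i)) t = b" for i
      unfolding z_def a_def b_def by (simp_all add: tval_fun_upd fresh_var_notin)
    then have "sat w \<sigma> \<psi> \<longleftrightarrow> a < b \<and> \<not> (\<exists>i\<le>length w + 1. a < i \<and> i < b) \<and>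
        1 \<le> a \<and> a \<le> length w \<and> w ! (a - 1) = c"
      by (simp add: \<psi>_def a_def b_def Let_def)
    also have "\<dots> \<longleftrightarrow> b = Suc a \<and> a \<le> length w \<and> w ! (a - 1) = c"
      using h by (auto simp: a_def b_def)
    also have "\<dots> \<longleftrightarrow> segment w a b = [c]"
      using segment_eq_singleton_iff[OF h] by (simp add: a_def b_def)
    finally show "sat w \<sigma> \<psi> \<longleftrightarrow> segment w (tval w \<sigma> s) (tval w \<sigma> t) \<in> {[c]}"
      by (simp add: a_def b_def)
  qed
  then show ?thesis ..
qed

lemma segment_in_conc_iff:
  assumes "1 \<le> a" "a \<le> b" "b \<le> length w + 1"
  shows "segment w a b \<in> conc K L \<longleftrightarrow>
    (\<exists>i. a \<le> i \<and> i \<le> b \<and> segment w a i \<in> K \<and> segment w i b \<in> L)"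
proof
  assume "segment w a b \<in> conc K L"
  then obtain u v where uv: "segment w a b = u @ v" "u \<in> K" "v \<in> L"
    unfolding conc_def by blast
  define i where "i = a + length u"
  have i: "a \<le> i" "i \<le> b"
    using uv(1) length_segment[OF assms] assms(2) by (auto simp: i_def dest: arg_cong[where f = length])
  then have "segment w a i @ segment w i b = u @ v"
    using uv(1) segment_append[OF assms(1) i, of w] by simp
  moreover have "length (segment w a i) = length u"
    using i assms by (simp add: length_segment i_def)
  ultimately have "segment w a i = u" "segment w i b = v"
    by simp_all
  then show "\<exists>i. a \<le> i \<and> i \<le> b \<and> segment w a i \<in> K \<and> segment w i b \<in> L"
    using i uv by blast
next
  assume "\<exists>i. a \<le> i \<and> i \<le> b \<and> segment w a i \<in> K \<and> segment w i b \<in> L"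
  then obtain i where "a \<le> i" "i \<le> b" "segment w a i \<in> K" "segment w i b \<in> L"
    by blast
  moreover have "segment w a i @ segment w i b = segment w a b"
    using segment_append[OF assms(1) \<open>a \<le> i\<close> \<open>i \<le> b\<close>] .
  ultimately show "segment w a b \<in> conc K L"
    unfolding conc_def by (intro CollectI exI[of _ "segment w a i"] exI[of _ "segment w i b"]) simp
qed

lemma conc_defines_segment:
  assumes "\<And>s t. \<exists>\<psi>. defines_segment G K s t \<psi>" "\<And>s t. \<exists>\<psi>. defines_segment G L s t \<psi>"
  shows "\<exists>\<psi>. defines_segment G (conc K L) s t \<psi>"
proof -
  define z where "z = fresh_var s t"
  obtain \<psi>1 \<psi>2 where \<psi>1: "defines_segment G K s (Var z) \<psi>1" and \<psi>2: "defines_segment G L (Var z) t \<psi>2"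
    using assms by blast
  define \<psi> where "\<psi> = Ex z (Conj (Disj (Less s (Var z)) (Eq s (Var z)))
    (Conj (Disj (Less (Var z) t) (Eq (Var z) t)) (Conj \<psi>1 \<psi>2)))"
  have "defines_segment G (conc K L) s t \<psi>"
    unfolding defines_segment_def
  proof (intro conjI allI impI)
    show "free_vars \<psi> \<subseteq> tvars s \<union> tvars t" "preds \<psi> \<subseteq> G"
      using \<psi>1 \<psi>2 by (auto simp: \<psi>_def defines_segment_def)
    fix w :: "'a list" and \<sigma>
    assume h: "1 \<le> tval w \<sigma> s" "tval w \<sigma> s \<le> tval w \<sigma> t" "tval w \<sigma> t \<le> length w + 1"
    define a b where "a = tval w \<sigma> s" and "b = tval w \<sigma> t"
    have ab: "tval w (\<sigma>(z := i)) s = a" "tval w (\<sigma>(z := i)) t = b" for i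
      unfolding z_def a_def b_def by (simp_all add: tval_fun_upd fresh_var_notin)
    have sat_iff: "sat w (\<sigma>(z := i)) \<psi>1 \<and> sat w (\<sigma>(z := i)) \<psi>2 \<longleftrightarrow>
        segment w a i \<in> K \<and> segment w i b \<in> L" if "a \<le> i" "i \<le> b" for i
      using \<psi>1 \<psi>2 ab[of i] that h unfolding defines_segment_def a_def b_def by auto
    have "sat w \<sigma> \<psi> \<longleftrightarrow>
        (\<exists>i\<le>length w + 1. a \<le> i \<and> i \<le> b \<and> sat w (\<sigma>(z := i)) \<psi>1 \<and> sat w (\<sigma>(z := i)) \<psi>2)"
      using ab by (simp add: \<psi>_def le_less)
    also have "\<dots> \<longleftrightarrow> (\<exists>i. a \<le> i \<and> i \<le> b \<and> segment w a i \<in> K \<and> segment w i b \<in> L)"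
      using sat_iff h(3) by (auto simp: b_def) (meson le_trans)
    also have "\<dots> \<longleftrightarrow> segment w a b \<in> conc K L"
      using segment_in_conc_iff[OF h] by (simp add: a_def b_def)
    finally show "sat w \<sigma> \<psi> \<longleftrightarrow> segment w (tval w \<sigma> s) (tval w \<sigma> t) \<in> conc K L"
      by (simp add: a_def b_def)
  qed
  then show ?thesis ..
qed

lemma SF_defines_segment:
  assumes "group_prevariety G" "K \<in> SF G"
  shows "\<exists>\<psi>. defines_segment G K s t \<psi>"
  using assms(2)
proof (induction K arbitrary: s t rule: SF.induct)
  case (base L)
  then show ?case using group_language_defines_segment[OF assms(1)] by blast
next
  case (letter a)
  then show ?case by (rule letter_defines_segment)
next
  case (union K L)
  then obtain \<psi>1 \<psi>2 where "defines_segment G K s t \<psi>1" "defines_segment G L s t \<psi>2"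
    by blast
  then have "defines_segment G (K \<union> L) s t (Disj \<psi>1 \<psi>2)"
    by (auto simp: defines_segment_def)
  then show ?case ..
next
  case (compl L)
  then obtain \<psi> where "defines_segment G L s t \<psi>"
    by blast
  then have "defines_segment G (- L) s t (Neg \<psi>)"
    by (auto simp: defines_segment_def)
  then show ?case ..
next
  case (concat K L)
  then show ?case by (intro conc_defines_segment)
qed

lemma SF_subset_FO:
  assumes "group_prevariety G"
  shows "SF G \<subseteq> FO_less_P (G :: 'a lang set)"
proof
  fix K :: "'a lang" assume "K \<in> SF G"
  then obtain \<psi> where \<psi>: "defines_segment G K (Var 0) Max \<psi>"
    using SF_defines_segment[OF assms] by blast
  text \<open>The first position \<open>1\<close> is not a term; it is the successor of \<open>min\<close>.\<close>
  define \<chi> where "\<chi> = Ex 0 (Conj (Conj (Less Min (Var 0))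
    (Neg (Ex 1 (Conj (Less Min (Var 1)) (Less (Var 1) (Var 0)))))) \<psi>)"
  have "free_vars \<chi> = {}" "preds \<chi> \<subseteq> G"
    using \<psi> by (auto simp: \<chi>_def defines_segment_def)
  moreover have "lang_of \<chi> = K"
  proof (rule Set.set_eqI)
    fix w :: "'a list"
    have first: "(0 < i \<and> \<not> (\<exists>j\<le>length w + 1. 0 < j \<and> j < i)) \<longleftrightarrow> i = 1"
      if "i \<le> length w + 1" for i :: nat
      using that by (cases i) (auto intro: exI[of _ 1])
    have "w \<in> lang_of \<chi> \<longleftrightarrow> (\<exists>i\<le>length w + 1.
        (0 < i \<and> \<not> (\<exists>j\<le>length w + 1. 0 < j \<and> j < i)) \<and> sat w ((\<lambda>_. 0)(0 := i)) \<psi>)"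
      by (simp add: lang_of_def \<chi>_def)
    also have "\<dots> \<longleftrightarrow> sat w ((\<lambda>_. 0)(0 := 1)) \<psi>"
      using first by auto
    also have "\<dots> \<longleftrightarrow> segment w 1 (length w + 1) \<in> K"
      using \<psi> unfolding defines_segment_def by simp
    finally show "w \<in> lang_of \<chi> \<longleftrightarrow> w \<in> K"
      by (simp add: segment_def)
  qed
  ultimately show "K \<in> FO_less_P G"
    unfolding FO_less_P_def by blast
qed

theorem corollary6p6:
  fixes G :: "'a lang set"
  assumes "finite (UNIV :: 'a set)"
    and "group_prevariety G"
  shows "SF G = FO_less_P G"
  using SF_subset_FO[OF assms(2)] FO_subset_SF[OF assms(2,1)] by (rule subset_antisym)

end
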